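(* Let $A$ be a complex semi-simple commutative Banach algebra and $\widetilde{\sigma}:A\to A$ an algebra automorphism. Then the commutant $A'$ of $A$ in $A\rtimes_{\widetilde{\sigma}}\mathbb{Z}$ is finitely generated as an algebra over $\mathbb{C}$ if and only if $A$ is finite-dimensional as a vector space over $\mathbb{C}$.
   Context: $A$ is semi-simple if the Gelfand transform $a\mapsto\widehat{a}$, $\widehat{a}(\mu)=\mu(a)$ for non-zero multiplicative linear functionals $\mu$, is injective. $A\rtimes_{\widetilde{\sigma}}\mathbb{Z}$ is the set of finitely supported functions $\mathbb{Z}\to A$, written $\sum_n a_n\delta^n$, with pointwise linear operations and multiplication determined by $(a_n\delta^n)*(b_m\delta^m)=a_n\widetilde{\sigma}^n(b_m)\delta^{n+m}$; $A$ is embedded as $\{a_0\delta^0\}$, and $A'=\{f : f*a=a*f \text{ for all } a\in A\}$. *)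

theory Defs
  imports Complex_Main
begin

text \<open>A complex commutative Banach algebra is modelled as a type of class
  real_normed_algebra, comm_ring, banach (a commutative real Banach algebra,
  not necessarily unital) together with a complex scalar multiplication
  that extends scaleR, makes it a complex vector space, is compatible with
  the product and satisfies norm homogeneity.\<close>

definition complex_scalar ::
  "(complex \<Rightarrow> 'a::{real_normed_algebra,comm_ring,banach} \<Rightarrow> 'a) \<Rightarrow> bool" where
  "complex_scalar smul \<longleftrightarrow>
     (\<forall>r x. smul (complex_of_real r) x = scaleR r x) \<and>
     (\<forall>c x y. smul c (x + y) = smul c x + smul c y) \<and>
     (\<forall>c d x. smul (c + d) x = smul c x + smul d x) \<and>
     (\<forall>c d x. smul (c * d) x = smul c (smul d x)) \<and>
     (\<forall>x. smul 1 x = x) \<and>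
     (\<forall>c x. norm (smul c x) = cmod c * norm x) \<and>
     (\<forall>c x y. smul c (x * y) = smul c x * y)"

definition character ::
  "(complex \<Rightarrow> 'a::{real_normed_algebra,comm_ring,banach} \<Rightarrow> 'a) \<Rightarrow> ('a \<Rightarrow> complex) \<Rightarrow> bool" where
  "character smul \<mu> \<longleftrightarrow>
     (\<forall>x y. \<mu> (x + y) = \<mu> x + \<mu> y) \<and>
     (\<forall>c x. \<mu> (smul c x) = c * \<mu> x) \<and>
     (\<forall>x y. \<mu> (x * y) = \<mu> x * \<mu> y) \<and>
     (\<exists>x. \<mu> x \<noteq> 0)"

text \<open>Semi-simplicity: the Gelfand transform a \<mapsto> (\<mu> \<mapsto> \<mu> a) is injective.\<close>
definition semisimple ::
  "(complex \<Rightarrow> 'a::{real_normed_algebra,comm_ring,banach} \<Rightarrow> 'a) \<Rightarrow> bool" where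
  "semisimple smul \<longleftrightarrow>
     (\<forall>a b. (\<forall>\<mu>. character smul \<mu> \<longrightarrow> \<mu> a = \<mu> b) \<longrightarrow> a = b)"

text \<open>Algebra automorphism (complex-linear, multiplicative, bijective; no continuity).\<close>
definition algebra_automorphism ::
  "(complex \<Rightarrow> 'a::{real_normed_algebra,comm_ring,banach} \<Rightarrow> 'a) \<Rightarrow> ('a \<Rightarrow> 'a) \<Rightarrow> bool" where
  "algebra_automorphism smul \<sigma> \<longleftrightarrow>
     bij \<sigma> \<and>
     (\<forall>x y. \<sigma> (x + y) = \<sigma> x + \<sigma> y) \<and>
     (\<forall>c x. \<sigma> (smul c x) = smul c (\<sigma> x)) \<and>
     (\<forall>x y. \<sigma> (x * y) = \<sigma> x * \<sigma> y)"

definition int_pow :: "('a \<Rightarrow> 'a) \<Rightarrow> int \<Rightarrow> 'a \<Rightarrow> 'a" where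
  "int_pow \<sigma> n = (if 0 \<le> n then \<sigma> ^^ nat n else (inv \<sigma>) ^^ nat (- n))"

text \<open>Crossed product: finitely supported functions int \<Rightarrow> A, f = \<Sum> f n \<delta>^n.\<close>
definition cp_carrier :: "(int \<Rightarrow> 'a::zero) set" where
  "cp_carrier = {f. finite {n. f n \<noteq> 0}}"

definition cp_mult ::
  "('a \<Rightarrow> 'a) \<Rightarrow> (int \<Rightarrow> 'a::{comm_ring}) \<Rightarrow> (int \<Rightarrow> 'a) \<Rightarrow> int \<Rightarrow> 'a" where
  "cp_mult \<sigma> f g = (\<lambda>k. \<Sum>n\<in>{n. f n \<noteq> 0}. f n * int_pow \<sigma> n (g (k - n)))"

definition cp_embed :: "'a::zero \<Rightarrow> int \<Rightarrow> 'a" where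
  "cp_embed a = (\<lambda>n. if n = 0 then a else 0)"

definition commutant :: "('a \<Rightarrow> 'a) \<Rightarrow> (int \<Rightarrow> 'a::comm_ring) set" where
  "commutant \<sigma> = {f \<in> cp_carrier.
      \<forall>a. cp_mult \<sigma> f (cp_embed a) = cp_mult \<sigma> (cp_embed a) f}"

inductive_set gen_subalg ::
  "(complex \<Rightarrow> 'a \<Rightarrow> 'a) \<Rightarrow> ('a \<Rightarrow> 'a) \<Rightarrow> (int \<Rightarrow> 'a::comm_ring) set \<Rightarrow> (int \<Rightarrow> 'a) set"
  for smul \<sigma> S where
  gen_base: "f \<in> S \<Longrightarrow> f \<in> gen_subalg smul \<sigma> S"
| gen_zero: "(\<lambda>n. 0) \<in> gen_subalg smul \<sigma> S"
| gen_add: "f \<in> gen_subalg smul \<sigma> S \<Longrightarrow> g \<in> gen_subalg smul \<sigma> S \<Longrightarrow>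
             (\<lambda>n. f n + g n) \<in> gen_subalg smul \<sigma> S"
| gen_smul: "f \<in> gen_subalg smul \<sigma> S \<Longrightarrow> (\<lambda>n. smul c (f n)) \<in> gen_subalg smul \<sigma> S"
| gen_mult: "f \<in> gen_subalg smul \<sigma> S \<Longrightarrow> g \<in> gen_subalg smul \<sigma> S \<Longrightarrow>
             cp_mult \<sigma> f g \<in> gen_subalg smul \<sigma> S"

definition finitely_generated_algebra ::
  "(complex \<Rightarrow> 'a \<Rightarrow> 'a) \<Rightarrow> ('a \<Rightarrow> 'a) \<Rightarrow> (int \<Rightarrow> 'a::comm_ring) set \<Rightarrow> bool" where
  "finitely_generated_algebra smul \<sigma> B \<longleftrightarrow>
     (\<exists>S. finite S \<and> S \<subseteq> B \<and> gen_subalg smul \<sigma> S = B)"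

definition finite_dim_complex :: "(complex \<Rightarrow> 'a \<Rightarrow> 'a::comm_ring) \<Rightarrow> bool" where
  "finite_dim_complex smul \<longleftrightarrow>
     (\<exists>B. finite B \<and> (\<forall>x. \<exists>c. x = (\<Sum>b\<in>B. smul (c b) b)))"

end

theory Submission
  imports Defs "HOL-Analysis.Analysis"
begin

text \<open>If the commutant \<open>A'\<close> is generated by finitely many elements, then every coefficient of an
  element of \<open>A'\<close> is a linear combination of products of \<open>\<sigma>\<close>-iterates of coefficients of the
  generators. As \<open>A\<close> sits inside \<open>A'\<close> as the \<open>\<delta>\<^sup>0\<close>-coefficients, \<open>A\<close> is spanned by a countable
  set. A Banach space with a countable spanning set is the countable union of the closed subspaces
  spanned by its finite subsets, so by Baire's theorem one of them has interior and is everything.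

  Conversely, a finite-dimensional algebra has only finitely many characters, because peak elements of
  distinct characters are linearly independent. If it is semisimple, an element on which all
  characters are \<open>1\<close> is a unit, and \<open>\<sigma>\<close> permutes the characters, so \<open>\<sigma>\<^sup>N = id\<close> for some \<open>N > 0\<close>.
  Now \<open>\<Sum> c\<^sub>n \<delta>\<^sup>n\<close> lies in \<open>A'\<close> iff \<open>c\<^sub>n \<sigma>\<^sup>n(a) = a c\<^sub>n\<close> for all \<open>a\<close>, a condition depending only on
  \<open>n mod N\<close>; hence \<open>A'\<close> is generated by \<open>\<delta>\<^sup>N\<close>, \<open>\<delta>\<^sup>-\<^sup>N\<close> and the monomials \<open>b \<delta>\<^sup>r\<close> with \<open>0 \<le> r < N\<close>
  and \<open>b\<close> running through a basis of the admissible coefficients at \<open>\<delta>\<^sup>r\<close>.\<close>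

section \<open>Integer powers of bijections and automorphisms\<close>

lemma int_pow_0 [simp]: "int_pow \<sigma> 0 = id"
  by (simp add: int_pow_def)

lemma int_pow_succ:
  assumes "bij \<sigma>"
  shows "int_pow \<sigma> (n + 1) = \<sigma> \<circ> int_pow \<sigma> n"
proof (cases "n \<ge> 0")
  case True
  then have "nat (n + 1) = Suc (nat n)" by simp
  then show ?thesis using True by (simp add: int_pow_def)
next
  case False
  have "\<sigma> \<circ> inv \<sigma> = id"
    using assms bij_is_surj surj_iff by blast
  moreover have "nat (- n) = Suc (nat (- (n + 1)))"
    using False by simp
  ultimately show ?thesis
    using False by (simp add: int_pow_def funpow_Suc_right flip: comp_assoc)
qed

lemma int_pow_add:
  assumes "bij \<sigma>"
  shows "int_pow \<sigma> (m + n) = int_pow \<sigma> m \<circ> int_pow \<sigma> n"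
proof (induction m rule: int_induct[where k = 0])
  case base
  then show ?case by simp
next
  case (step1 m)
  then show ?case by (metis add.commute add.left_commute assms comp_assoc int_pow_succ)
next
  case (step2 m)
  have "int_pow \<sigma> (k - 1) = inv \<sigma> \<circ> int_pow \<sigma> k" for k
    using int_pow_succ[OF assms, of "k - 1"] assms
    by (simp add: bij_is_inj flip: comp_assoc)
  then show ?case using step2 by (simp add: algebra_simps comp_assoc)
qed

lemma int_pow_neg_cancel:
  assumes "bij \<sigma>"
  shows "int_pow \<sigma> (- n) (int_pow \<sigma> n x) = x" and "int_pow \<sigma> n (int_pow \<sigma> (- n) x) = x"
  using int_pow_add[OF assms, of "- n" n] int_pow_add[OF assms, of n "- n"]
  by (simp_all add: fun_eq_iff)

lemma int_pow_mod:
  assumes "bij \<sigma>" and "int_pow \<sigma> N = id"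
  shows "int_pow \<sigma> n = int_pow \<sigma> (n mod N)"
proof -
  have "int_pow \<sigma> (q * N) = id" for q
  proof (induction q rule: int_induct[where k = 0])
    case base
    then show ?case by simp
  next
    case (step1 q)
    then show ?case using int_pow_add[OF assms(1), of "q * N" N] assms(2) by (simp add: algebra_simps)
  next
    case (step2 q)
    have "int_pow \<sigma> (- N) = id"
      using int_pow_neg_cancel(1)[OF assms(1), of N] assms(2) by auto
    then show ?case using step2 int_pow_add[OF assms(1), of "q * N" "- N"] by (simp add: algebra_simps)
  qed
  then show ?thesis
    using int_pow_add[OF assms(1), of "n div N * N" "n mod N"] by simp
qed

lemma algebra_automorphism_zero: "algebra_automorphism smul f \<Longrightarrow> f 0 = 0"
  unfolding algebra_automorphism_def by (metis add_cancel_right_right)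

lemma algebra_automorphism_comp:
  "algebra_automorphism smul f \<Longrightarrow> algebra_automorphism smul g \<Longrightarrow>
    algebra_automorphism smul (f \<circ> g)"
  by (simp add: algebra_automorphism_def bij_comp)

lemma algebra_automorphism_inv:
  assumes "algebra_automorphism smul f"
  shows "algebra_automorphism smul (inv f)"
proof -
  have bij: "bij f" and hom: "\<And>x y. f (x + y) = f x + f y" "\<And>c x. f (smul c x) = smul c (f x)"
      "\<And>x y. f (x * y) = f x * f y"
    using assms by (auto simp: algebra_automorphism_def)
  have f_inv: "f (inv f x) = x" and inv_f: "inv f (f x) = x" for x
    using bij by (simp_all add: bij_is_inj bij_is_surj surj_f_inv_f)
  show ?thesis
    unfolding algebra_automorphism_def
    by (metis bij bij_imp_bij_inv f_inv inv_f hom)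
qed

lemma algebra_automorphism_funpow:
  "algebra_automorphism smul f \<Longrightarrow> algebra_automorphism smul (f ^^ k)"
proof (induction k)
  case 0
  show ?case by (simp add: algebra_automorphism_def bij_id[unfolded id_def])
next
  case (Suc k)
  then show ?case by (metis algebra_automorphism_comp funpow.simps(2))
qed

lemma algebra_automorphism_int_pow:
  "algebra_automorphism smul \<sigma> \<Longrightarrow> algebra_automorphism smul (int_pow \<sigma> n)"
  by (simp add: int_pow_def algebra_automorphism_funpow algebra_automorphism_inv)

lemma surj_multiplicative_fixes_unit:
  fixes u :: "'a::ab_semigroup_mult"
  assumes "surj f" and mult: "\<And>x y. f (x * y) = f x * f y" and unit: "\<And>a. u * a = a"
  shows "f u = u"
proof -
  have "f u * b = b" for b
    using \<open>surj f\<close> mult unit by (metis surjD)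
  then show ?thesis
    using unit[of "f u"] by (simp add: mult.commute)
qed

section \<open>Banach spaces spanned by countable sets\<close>

lemma coefficient_le_infdist_span:
  fixes x :: "'a::real_normed_vector"
  assumes y: "y - k *\<^sub>R x \<in> span F"
  shows "\<bar>k\<bar> * infdist x (span F) \<le> norm y"
proof (cases "k = 0")
  case False
  have "x - (1 / k) *\<^sub>R y = - (1 / k) *\<^sub>R (y - k *\<^sub>R x)"
    using False by (simp add: algebra_simps)
  then have "x - (1 / k) *\<^sub>R y \<in> span F"
    using y by (simp add: span_scale span_neg)
  then have "infdist x (span F) \<le> dist x (x - (1 / k) *\<^sub>R y)"
    by (rule infdist_le)
  also have "\<dots> = norm y / \<bar>k\<bar>"
    by (simp add: dist_norm)
  finally show ?thesis
    using False by (simp add: field_simps)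
qed simp

lemma closed_span_insert:
  fixes x :: "'a::real_normed_vector"
  assumes closed: "closed (span F)" and x: "x \<notin> span F"
  shows "closed (span (insert x F))"
proof -
  define d where "d = infdist x (span F)"
  have "d > 0"
    unfolding d_def using infdist_pos_not_in_closed[OF closed] x span_zero by blast
  show ?thesis
    unfolding span_insert closed_sequential_limits
  proof (intro allI impI, elim conjE)
    fix s l
    assume "\<forall>n. s n \<in> {y. \<exists>k. y - k *\<^sub>R x \<in> span F}" and lim: "s \<longlonglongrightarrow> l"
    then have "\<forall>n. \<exists>k. s n - k *\<^sub>R x \<in> span F"
      by simp
    then obtain k where k: "\<And>n. s n - k n *\<^sub>R x \<in> span F"
      by metis
    obtain B where B: "\<And>n. norm (s n) \<le> B"
      using convergent_imp_bounded[OF lim] by (auto simp: bounded_iff)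
    have "\<bar>k n\<bar> \<le> B / d" for n
      using coefficient_le_infdist_span[OF k, of n] B[of n] \<open>d > 0\<close> by (simp add: d_def field_simps)
    then have "bounded (range k)"
      by (auto simp: bounded_iff)
    then obtain c r where r: "strict_mono r" and kr: "(k \<circ> r) \<longlonglongrightarrow> c"
      using bounded_imp_convergent_subsequence by blast
    have "(\<lambda>n. s (r n) - k (r n) *\<^sub>R x) \<longlonglongrightarrow> l - c *\<^sub>R x"
      using LIMSEQ_subseq_LIMSEQ[OF lim r] kr
      by (intro tendsto_intros) (simp_all add: o_def)
    then have "l - c *\<^sub>R x \<in> span F"
      using closed_sequentially[OF closed, of "\<lambda>n. s (r n) - k (r n) *\<^sub>R x"] k by blast
    then show "l \<in> {y. \<exists>k. y - k *\<^sub>R x \<in> span F}"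
      by blast
  qed
qed

lemma closed_span_finite:
  fixes F :: "'a::real_normed_vector set"
  shows "finite F \<Longrightarrow> closed (span F)"
proof (induction F rule: finite_induct)
  case empty
  then show ?case by simp
next
  case (insert x F)
  show ?case
  proof (cases "x \<in> span F")
    case True
    then show ?thesis
      using insert.IH by (simp add: span_redundant)
  next
    case False
    then show ?thesis
      using insert.IH by (rule closed_span_insert[rotated])
  qed
qed

lemma subspace_eq_UNIV_if_interior_nonempty:
  fixes S :: "'a::real_normed_vector set"
  assumes S: "subspace S" and "interior S \<noteq> {}"
  shows "S = UNIV"
proof -
  obtain x e where "e > 0" and ball: "ball x e \<subseteq> S"
    using assms(2) by (auto simp: mem_interior)
  have "y \<in> S" if "y \<noteq> 0" for y
  proof -
    define t where "t = e / (2 * norm y)"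
    have "t > 0"
      using \<open>e > 0\<close> that by (simp add: t_def)
    have "x + t *\<^sub>R y \<in> S" and "x \<in> S"
      using ball \<open>e > 0\<close> \<open>t > 0\<close> that by (auto simp: dist_norm t_def subset_iff)
    then have "(1 / t) *\<^sub>R ((x + t *\<^sub>R y) - x) \<in> S"
      by (simp only: S subspace_diff subspace_scale)
    moreover have "(1 / t) *\<^sub>R ((x + t *\<^sub>R y) - x) = y"
      using \<open>t > 0\<close> by simp
    ultimately show ?thesis
      by simp
  qed
  then show ?thesis
    using subspace_0[OF S] by (metis UNIV_eq_I)
qed

lemma in_span_imp_finite_subset:
  "x \<in> span D \<Longrightarrow> \<exists>T. finite T \<and> T \<subseteq> D \<and> x \<in> span T"
proof (induction rule: span_induct_alt)
  case base
  then show ?case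
    using span_zero by blast
next
  case (step c d y)
  then obtain T where "finite T" "T \<subseteq> D" "y \<in> span T"
    by blast
  moreover have "c *\<^sub>R d + y \<in> span (insert d T)"
    using \<open>y \<in> span T\<close> span_mono[OF subset_insertI]
    by (blast intro: span_add span_scale span_base)
  ultimately show ?case
    using step.hyps by blast
qed

lemma countable_span_imp_finite_span:
  fixes D :: "'a::banach set"
  assumes "countable D" and span_D: "span D = UNIV"
  obtains B :: "'a set" where "finite B" "span B = UNIV"
proof -
  define \<G> where "\<G> = span ` {T. finite T \<and> T \<subseteq> D}"
  have "x \<in> \<Union>\<G>" for x
  proof -
    obtain T where "finite T" "T \<subseteq> D" "x \<in> span T"
      using in_span_imp_finite_subset[of x D] span_D by blast
    then show ?thesis
      unfolding \<G>_def by blast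
  qed
  then have cover: "\<Union>\<G> = UNIV"
    by blast
  have "countable \<G>"
    unfolding \<G>_def using countable_Collect_finite_subset[OF assms(1)] by simp
  have "\<not> (\<forall>S\<in>\<G>. closedin euclidean S \<and> euclidean interior_of S = {})"
  proof
    assume "\<forall>S\<in>\<G>. closedin euclidean S \<and> euclidean interior_of S = {}"
    then have "euclidean interior_of \<Union>\<G> = {}"
      using Baire_category_alt[OF _ \<open>countable \<G>\<close>] completely_metrizable_space_euclidean by blast
    then show False
      using cover by simp
  qed
  then obtain T where "T \<subseteq> D" "finite T" and interior: "interior (span T) \<noteq> {}"
    unfolding \<G>_def by (auto simp: closed_span_finite simp flip: closed_closedin)
  show ?thesis
    using \<open>finite T\<close> subspace_eq_UNIV_if_interior_nonempty[OF subspace_span interior]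
    by (rule that)
qed

section \<open>Complex scalars\<close>

locale complex_banach_algebra =
  fixes smul :: "complex \<Rightarrow> 'a::{real_normed_algebra,comm_ring,banach} \<Rightarrow> 'a"
  assumes complex_scalar: "complex_scalar smul"
begin

lemma smul_of_real: "smul (complex_of_real r) x = r *\<^sub>R x"
  and smul_add_right: "smul c (x + y) = smul c x + smul c y"
  and smul_add_left: "smul (c + d) x = smul c x + smul d x"
  and smul_smul: "smul (c * d) x = smul c (smul d x)"
  and smul_one: "smul 1 x = x"
  and smul_mult_left: "smul c (x * y) = smul c x * y"
  using complex_scalar unfolding complex_scalar_def by auto

lemma smul_mult_right: "x * smul c y = smul c (x * y)"
  by (metis mult.commute smul_mult_left)

sublocale C: vector_space smul
  by unfold_locales (simp_all add: smul_add_right smul_add_left smul_smul smul_one)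

lemma smul_eq_Re_Im: "smul c x = Re c *\<^sub>R x + Im c *\<^sub>R smul \<i> x"
proof -
  have "c = complex_of_real (Re c) + complex_of_real (Im c) * \<i>"
    by (simp add: complex_eq_iff)
  then show ?thesis
    by (metis smul_add_left smul_smul smul_of_real)
qed

lemma span_subset_C_span: "span D \<subseteq> C.span D"
proof (rule span_minimal)
  show "subspace (C.span D)"
    unfolding subspace_def
    by (simp add: C.span_zero C.span_add C.span_scale flip: smul_of_real)
qed (rule C.span_superset)

lemma C_span_subset_span: "C.span D \<subseteq> span (D \<union> smul \<i> ` D)"
proof (rule C.span_minimal)
  let ?E = "D \<union> smul \<i> ` D"
  have "linear (smul \<i>)"
    by (rule linearI) (simp_all add: smul_add_right flip: smul_of_real smul_smul)
  moreover have "smul \<i> ` ?E \<subseteq> span ?E"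
  proof
    fix y
    assume "y \<in> smul \<i> ` ?E"
    then consider d where "d \<in> D" "y = smul \<i> d" | d where "d \<in> D" "y = smul \<i> (smul \<i> d)"
      by blast
    then show "y \<in> span ?E"
    proof cases
      case 1
      then show ?thesis by (simp add: span_base)
    next
      case 2
      have "smul \<i> (smul \<i> d) = - d"
        using C.scale_minus_left[of 1 d] by (simp flip: smul_smul)
      then show ?thesis
        using 2 by (simp add: span_neg span_base)
    qed
  qed
  ultimately have "smul \<i> y \<in> span ?E" if "y \<in> span ?E" for y
    using that linear_span_image[of "smul \<i>" ?E] span_mono span_span by blast
  then have "smul c y \<in> span ?E" if "y \<in> span ?E" for c y
    using that by (simp add: smul_eq_Re_Im[of c] span_add span_scale)
  then show "C.subspace (span ?E)"
    unfolding C.subspace_def by (simp add: span_zero span_add)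
qed (use span_superset[of "D \<union> smul \<i> ` D"] in blast)

lemma finite_dim_complex_iff_finite_span:
  "finite_dim_complex smul \<longleftrightarrow> (\<exists>B. finite B \<and> C.span B = UNIV)"
proof -
  have "C.span B = UNIV \<longleftrightarrow> (\<forall>x. \<exists>c. x = (\<Sum>b\<in>B. smul (c b) b))" if "finite B" for B
    using that by (auto simp: C.span_finite)
  then show ?thesis
    unfolding finite_dim_complex_def by blast
qed

lemma finite_dim_complex_if_countable_span:
  assumes "countable D" and "C.span D = UNIV"
  shows "finite_dim_complex smul"
proof -
  have "span (D \<union> smul \<i> ` D) = UNIV"
    using C_span_subset_span[of D] assms(2) by auto
  moreover have "countable (D \<union> smul \<i> ` D)"
    using assms(1) by simp
  ultimately obtain B :: "'a set" where "finite B" "span B = UNIV"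
    using countable_span_imp_finite_span by blast
  then show ?thesis
    unfolding finite_dim_complex_iff_finite_span using span_subset_C_span[of B] by auto
qed

lemma C_span_mult_closed:
  assumes D: "\<And>x y. x \<in> D \<Longrightarrow> y \<in> D \<Longrightarrow> x * y \<in> D"
    and "x \<in> C.span D" "y \<in> C.span D"
  shows "x * y \<in> C.span D"
proof -
  have left: "u * v \<in> C.span D" if "u \<in> D" "v \<in> C.span D" for u v
  proof -
    have "C.span D \<subseteq> {v. u * v \<in> C.span D}"
    proof (rule C.span_minimal)
      show "D \<subseteq> {v. u * v \<in> C.span D}"
        using D \<open>u \<in> D\<close> C.span_base by blast
      show "C.subspace {v. u * v \<in> C.span D}"
        by (rule C.subspaceI) (auto simp: distrib_left smul_mult_right C.span_zero C.span_add C.span_scale)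
    qed
    then show ?thesis
      using \<open>v \<in> C.span D\<close> by blast
  qed
  have "C.span D \<subseteq> {u. u * y \<in> C.span D}"
  proof (rule C.span_minimal)
    show "D \<subseteq> {u. u * y \<in> C.span D}"
      using left \<open>y \<in> C.span D\<close> by blast
    show "C.subspace {u. u * y \<in> C.span D}"
      by (rule C.subspaceI)
        (auto simp: distrib_right C.span_zero C.span_add C.span_scale simp flip: smul_mult_left)
  qed
  then show ?thesis
    using \<open>x \<in> C.span D\<close> by blast
qed

lemma finite_spanning_subset:
  assumes "finite_dim_complex smul"
  obtains B where "finite B" "B \<subseteq> W" "W \<subseteq> C.span B"
proof -
  obtain A where "finite A" "C.span A = UNIV"
    using assms finite_dim_complex_iff_finite_span by blast
  obtain B where "B \<subseteq> W" "C.independent B" "W \<subseteq> C.span B"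
    by (rule C.basis_exists)
  moreover have "finite B"
    using C.independent_span_bound[OF \<open>finite A\<close> \<open>C.independent B\<close>] \<open>C.span A = UNIV\<close> by simp
  ultimately show ?thesis
    using that by blast
qed

end

section \<open>Characters\<close>

lemma
  assumes "character smul \<mu>"
  shows character_add: "\<mu> (x + y) = \<mu> x + \<mu> y"
    and character_smul: "\<mu> (smul c x) = c * \<mu> x"
    and character_mult: "\<mu> (x * y) = \<mu> x * \<mu> y"
    and character_nonzero: "\<exists>x. \<mu> x \<noteq> 0"
  using assms by (auto simp: character_def)

lemma character_zero: "character smul \<mu> \<Longrightarrow> \<mu> 0 = 0"
  by (metis add_0 add_cancel_right_right character_add)

lemma character_diff: "character smul \<mu> \<Longrightarrow> \<mu> (x - y) = \<mu> x - \<mu> y"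
  by (metis character_add eq_diff_eq)

lemma character_separating_element:
  assumes \<mu>: "character smul \<mu>" and \<nu>: "character smul \<nu>" and "\<mu> \<noteq> \<nu>"
  obtains w where "\<mu> w \<noteq> 0" "\<nu> w = 0"
proof -
  obtain x where x: "\<mu> x \<noteq> \<nu> x"
    using \<open>\<mu> \<noteq> \<nu>\<close> by auto
  obtain y where y: "\<mu> y \<noteq> 0"
    using character_nonzero[OF \<mu>] by auto
  let ?w = "y * x - smul (\<nu> x) y"
  have "\<mu> ?w = \<mu> y * (\<mu> x - \<nu> x)" and "\<nu> ?w = 0"
    by (simp_all add: character_diff[OF \<mu>] character_mult[OF \<mu>] character_smul[OF \<mu>]
        character_diff[OF \<nu>] character_mult[OF \<nu>] character_smul[OF \<nu>] algebra_simps)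
  then show ?thesis
    using x y by (intro that[of ?w]) simp_all
qed

lemma character_peak_element:
  assumes "finite K" "K \<subseteq> Collect (character smul)" "character smul \<mu>" "\<mu> \<notin> K"
  obtains e where "\<mu> e = 1" "\<And>\<nu>. \<nu> \<in> K \<Longrightarrow> \<nu> e = 0"
proof -
  have "\<exists>p. \<mu> p \<noteq> 0 \<and> (\<forall>\<nu>\<in>K. \<nu> p = 0)"
    using assms
  proof (induction K rule: finite_induct)
    case empty
    then show ?case
      using character_nonzero by blast
  next
    case (insert \<nu> K)
    then obtain p where p: "\<mu> p \<noteq> 0" "\<forall>\<nu>\<in>K. \<nu> p = 0"
      by auto
    obtain w where w: "\<mu> w \<noteq> 0" "\<nu> w = 0"
      using character_separating_element[of smul \<mu> \<nu>] insert.prems by auto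
    have "\<mu> (p * w) \<noteq> 0" "\<forall>\<nu>'\<in>insert \<nu> K. \<nu>' (p * w) = 0"
      using p w insert.prems by (auto simp: character_mult)
    then show ?case
      by blast
  qed
  then obtain p where p: "\<mu> p \<noteq> 0" "\<forall>\<nu>\<in>K. \<nu> p = 0"
    by blast
  show ?thesis
  proof (rule that[of "smul (1 / \<mu> p) p"])
    show "\<mu> (smul (1 / \<mu> p) p) = 1"
      using p(1) by (simp add: character_smul[OF assms(3)])
    show "\<nu> (smul (1 / \<mu> p) p) = 0" if "\<nu> \<in> K" for \<nu>
      using that p(2) assms(2) by (auto simp: character_smul)
  qed
qed

lemma character_peak_family:
  assumes "finite K" "K \<subseteq> Collect (character smul)"
  obtains e where "\<And>\<mu>. \<mu> \<in> K \<Longrightarrow> \<mu> (e \<mu>) = 1"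
    "\<And>\<mu> \<nu>. \<mu> \<in> K \<Longrightarrow> \<nu> \<in> K \<Longrightarrow> \<nu> \<noteq> \<mu> \<Longrightarrow> \<nu> (e \<mu>) = 0"
proof -
  have "\<exists>e. \<mu> e = 1 \<and> (\<forall>\<nu>\<in>K - {\<mu>}. \<nu> e = 0)" if "\<mu> \<in> K" for \<mu>
  proof -
    have "finite (K - {\<mu>})" "K - {\<mu>} \<subseteq> Collect (character smul)" "character smul \<mu>"
      using that assms by auto
    then obtain e where "\<mu> e = 1" "\<And>\<nu>. \<nu> \<in> K - {\<mu>} \<Longrightarrow> \<nu> e = 0"
      by (rule character_peak_element) blast+
    then show ?thesis
      by blast
  qed
  then obtain e where e: "\<And>\<mu>. \<mu> \<in> K \<Longrightarrow> \<mu> (e \<mu>) = 1 \<and> (\<forall>\<nu>\<in>K - {\<mu>}. \<nu> (e \<mu>) = 0)"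
    by metis
  show ?thesis
    by (rule that[of e]) (simp_all add: e)
qed

text \<open>The element \<open>u + e - u e\<close> takes the value \<open>1\<close> wherever \<open>u\<close> or \<open>e\<close> does.\<close>
lemma characters_common_one:
  assumes "finite K" "K \<subseteq> Collect (character smul)"
  obtains u where "\<And>\<nu>. \<nu> \<in> K \<Longrightarrow> \<nu> u = 1"
proof -
  have "\<exists>u. \<forall>\<nu>\<in>K. \<nu> u = 1"
    using assms
  proof (induction K rule: finite_induct)
    case empty
    then show ?case by simp
  next
    case (insert \<mu> K)
    then obtain u where u: "\<forall>\<nu>\<in>K. \<nu> u = 1"
      by auto
    obtain e where e: "\<mu> e = 1" "\<And>\<nu>. \<nu> \<in> K \<Longrightarrow> \<nu> e = 0"
      using character_peak_element[of K smul \<mu>] insert by auto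
    have "\<nu> (u + e - u * e) = 1" if "\<nu> \<in> insert \<mu> K" for \<nu>
    proof -
      have "\<nu> (u + e - u * e) = \<nu> u + \<nu> e - \<nu> u * \<nu> e"
        using that insert.prems by (auto simp: character_diff character_add character_mult)
      then show ?thesis
        using that u e by auto
    qed
    then show ?case
      by blast
  qed
  then show ?thesis
    using that by blast
qed

lemma semisimple_has_unit:
  fixes smul :: "complex \<Rightarrow> 'a::{real_normed_algebra,comm_ring,banach} \<Rightarrow> 'a"
  assumes "semisimple smul" and "finite (Collect (character smul))"
  obtains u :: 'a where "\<And>a. u * a = a"
proof -
  obtain u where u: "\<And>\<nu>. \<nu> \<in> Collect (character smul) \<Longrightarrow> \<nu> u = 1"
    using characters_common_one[OF assms(2) subset_refl] by blast
  have "u * a = a" for a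
    using assms(1) u unfolding semisimple_def by (simp add: character_mult)
  then show ?thesis
    by (rule that)
qed

context complex_banach_algebra
begin

lemma character_vanishes_on_span:
  assumes "character smul \<mu>" "\<And>t. t \<in> T \<Longrightarrow> \<mu> t = 0" "x \<in> C.span T"
  shows "\<mu> x = 0"
proof -
  have "C.span T \<subseteq> {x. \<mu> x = 0}"
    by (rule C.span_minimal)
      (use assms in \<open>auto intro!: C.subspaceI simp: character_zero character_add character_smul\<close>)
  then show ?thesis
    using assms(3) by blast
qed

text \<open>Peak elements of distinct characters are linearly independent.\<close>
lemma card_characters_le:
  assumes "finite B" "C.span B = UNIV" "finite K" "K \<subseteq> Collect (character smul)"
  shows "card K \<le> card B"
proof -
  obtain e where e1: "\<And>\<mu>. \<mu> \<in> K \<Longrightarrow> \<mu> (e \<mu>) = 1"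
    and e0: "\<And>\<mu> \<nu>. \<mu> \<in> K \<Longrightarrow> \<nu> \<in> K \<Longrightarrow> \<nu> \<noteq> \<mu> \<Longrightarrow> \<nu> (e \<mu>) = 0"
    using character_peak_family[OF assms(3,4)] by blast
  have inj: "inj_on e K"
    by (rule inj_onI) (metis e0 e1 zero_neq_one)
  have "C.independent (e ` K)"
    unfolding C.dependent_def
  proof safe
    fix \<mu>
    assume "\<mu> \<in> K" and dep: "e \<mu> \<in> C.span (e ` K - {e \<mu>})"
    have "character smul \<mu>"
      using assms(4) \<open>\<mu> \<in> K\<close> by blast
    moreover have "\<mu> t = 0" if "t \<in> e ` K - {e \<mu>}" for t
      using that e0 \<open>\<mu> \<in> K\<close> by blast
    ultimately have "\<mu> (e \<mu>) = 0"
      using dep by (rule character_vanishes_on_span)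
    then show False
      using e1[OF \<open>\<mu> \<in> K\<close>] by simp
  qed
  then have "card (e ` K) \<le> card B"
    using C.independent_span_bound[OF assms(1)] assms(2) by auto
  then show ?thesis
    using card_image[OF inj] by simp
qed

lemma finite_characters:
  assumes "finite_dim_complex smul"
  shows "finite (Collect (character smul))"
proof (rule ccontr)
  obtain B where "finite B" "C.span B = UNIV"
    using assms finite_dim_complex_iff_finite_span by blast
  assume "infinite (Collect (character smul))"
  then obtain K where "finite K" "card K = Suc (card B)" "K \<subseteq> Collect (character smul)"
    using infinite_arbitrarily_large by blast
  then show False
    using card_characters_le[OF \<open>finite B\<close> \<open>C.span B = UNIV\<close>] by fastforce
qed

end

section \<open>The commutant of \<open>A\<close> in the crossed product\<close>

definition cp_monom :: "int \<Rightarrow> 'a::zero \<Rightarrow> int \<Rightarrow> 'a" where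
  "cp_monom n a = (\<lambda>k. if k = n then a else 0)"

definition twisted_commutant :: "('a \<Rightarrow> 'a) \<Rightarrow> int \<Rightarrow> 'a::comm_ring set" where
  "twisted_commutant \<sigma> n = {c. \<forall>a. c * int_pow \<sigma> n a = a * c}"

lemma cp_embed_eq_cp_monom: "cp_embed = cp_monom 0"
  by (simp add: fun_eq_iff cp_embed_def cp_monom_def)

lemma cp_monom_in_cp_carrier: "cp_monom n a \<in> cp_carrier"
proof -
  have "{k. cp_monom n a k \<noteq> 0} \<subseteq> {n}"
    by (auto simp: cp_monom_def)
  then show ?thesis
    unfolding cp_carrier_def by (auto intro: finite_subset)
qed

lemma cp_carrier_add:
  fixes f g :: "int \<Rightarrow> 'a::monoid_add"
  assumes "f \<in> cp_carrier" "g \<in> cp_carrier"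
  shows "(\<lambda>n. f n + g n) \<in> cp_carrier"
proof -
  have "{n. f n + g n \<noteq> 0} \<subseteq> {n. f n \<noteq> 0} \<union> {n. g n \<noteq> 0}"
    by auto
  then show ?thesis
    using assms unfolding cp_carrier_def by (auto intro: finite_subset)
qed

lemma cp_carrier_map: "f \<in> cp_carrier \<Longrightarrow> h 0 = 0 \<Longrightarrow> (\<lambda>n. h (f n)) \<in> cp_carrier"
  unfolding cp_carrier_def by (auto elim: finite_subset[rotated])

lemma cp_mult_eq_sum:
  assumes "finite F" "{n. f n \<noteq> 0} \<subseteq> F"
  shows "cp_mult \<sigma> f g k = (\<Sum>n\<in>F. f n * int_pow \<sigma> n (g (k - n)))"
  unfolding cp_mult_def by (rule sum.mono_neutral_left) (use assms in auto)

lemma cp_mult_monom_left: "cp_mult \<sigma> (cp_monom n a) g k = a * int_pow \<sigma> n (g (k - n))"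
  by (subst cp_mult_eq_sum[of "{n}"]) (auto simp: cp_monom_def)

lemma cp_carrier_eq_sum_monom:
  assumes "f \<in> cp_carrier"
  shows "f = (\<lambda>k. \<Sum>n\<in>{n. f n \<noteq> 0}. cp_monom n (f n) k)"
proof
  fix k
  have "finite {n. f n \<noteq> 0}"
    using assms by (simp add: cp_carrier_def)
  then show "f k = (\<Sum>n\<in>{n. f n \<noteq> 0}. cp_monom n (f n) k)"
    by (simp add: cp_monom_def sum.delta)
qed

lemma gen_subalg_sum:
  assumes "finite F" "\<And>i. i \<in> F \<Longrightarrow> h i \<in> gen_subalg smul \<sigma> S"
  shows "(\<lambda>k. \<Sum>i\<in>F. h i k) \<in> gen_subalg smul \<sigma> S"
  using assms by (induction F rule: finite_induct) (simp_all add: gen_zero gen_add)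

locale crossed_product = complex_banach_algebra +
  fixes \<sigma> :: "'a \<Rightarrow> 'a"
  assumes automorphism: "algebra_automorphism smul \<sigma>"
begin

lemma bij_\<sigma>: "bij \<sigma>"
  using automorphism by (simp add: algebra_automorphism_def)

lemma int_pow_automorphism: "algebra_automorphism smul (int_pow \<sigma> n)"
  by (rule algebra_automorphism_int_pow[OF automorphism])

lemma int_pow_zero [simp]: "int_pow \<sigma> n 0 = 0"
  by (rule algebra_automorphism_zero[OF int_pow_automorphism])

lemma int_pow_map_add: "int_pow \<sigma> n (x + y) = int_pow \<sigma> n x + int_pow \<sigma> n y"
  and int_pow_map_smul: "int_pow \<sigma> n (smul c x) = smul c (int_pow \<sigma> n x)"
  and int_pow_map_mult: "int_pow \<sigma> n (x * y) = int_pow \<sigma> n x * int_pow \<sigma> n y"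
  using int_pow_automorphism by (simp_all add: algebra_automorphism_def)

lemma cp_mult_monom: "cp_mult \<sigma> (cp_monom n a) (cp_monom m b) = cp_monom (n + m) (a * int_pow \<sigma> n b)"
  unfolding fun_eq_iff cp_mult_monom_left by (simp add: cp_monom_def)

lemma cp_mult_monom_right:
  assumes "f \<in> cp_carrier"
  shows "cp_mult \<sigma> f (cp_monom m b) k = f (k - m) * int_pow \<sigma> (k - m) b"
proof -
  let ?F = "insert (k - m) {n. f n \<noteq> 0}"
  have "finite ?F"
    using assms by (simp add: cp_carrier_def)
  then have "cp_mult \<sigma> f (cp_monom m b) k = (\<Sum>n\<in>?F. f n * int_pow \<sigma> n (cp_monom m b (k - n)))"
    by (rule cp_mult_eq_sum) auto
  also have "\<dots> = (\<Sum>n\<in>?F. if n = k - m then f (k - m) * int_pow \<sigma> (k - m) b else 0)"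
    by (rule sum.cong) (auto simp: cp_monom_def)
  also have "\<dots> = f (k - m) * int_pow \<sigma> (k - m) b"
    using \<open>finite ?F\<close> by simp
  finally show ?thesis .
qed

lemma commutant_iff: "f \<in> commutant \<sigma> \<longleftrightarrow> f \<in> cp_carrier \<and> (\<forall>n. f n \<in> twisted_commutant \<sigma> n)"
  unfolding commutant_def twisted_commutant_def cp_embed_eq_cp_monom
  by (auto simp: fun_eq_iff cp_mult_monom_right cp_mult_monom_left)

lemma zero_in_twisted_commutant: "0 \<in> twisted_commutant \<sigma> n"
  by (simp add: twisted_commutant_def)

lemma twisted_commutant_subspace: "C.subspace (twisted_commutant \<sigma> n)"
  unfolding twisted_commutant_def
  by (rule C.subspaceI) (auto simp: distrib_left distrib_right smul_mult_right simp flip: smul_mult_left)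

lemma cp_monom_in_commutant:
  assumes "c \<in> twisted_commutant \<sigma> n"
  shows "cp_monom n c \<in> commutant \<sigma>"
proof -
  have "cp_monom n c k \<in> twisted_commutant \<sigma> k" for k
    using assms zero_in_twisted_commutant by (simp add: cp_monom_def)
  then show ?thesis
    by (simp add: commutant_iff cp_monom_in_cp_carrier)
qed

lemma cp_embed_in_commutant: "cp_embed a \<in> commutant \<sigma>"
  unfolding cp_embed_eq_cp_monom
  by (rule cp_monom_in_commutant) (simp add: twisted_commutant_def mult.commute)

lemma cp_mult_in_cp_carrier:
  assumes "f \<in> cp_carrier" "g \<in> cp_carrier"
  shows "cp_mult \<sigma> f g \<in> cp_carrier"
proof -
  let ?F = "{n. f n \<noteq> 0}" and ?G = "{n. g n \<noteq> 0}"
  have "{k. cp_mult \<sigma> f g k \<noteq> 0} \<subseteq> (\<lambda>(n, m). n + m) ` (?F \<times> ?G)"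
  proof
    fix k
    assume "k \<in> {k. cp_mult \<sigma> f g k \<noteq> 0}"
    then obtain n where "n \<in> ?F" "f n * int_pow \<sigma> n (g (k - n)) \<noteq> 0"
      unfolding cp_mult_def using sum.not_neutral_contains_not_neutral by force
    then have "(n, k - n) \<in> ?F \<times> ?G"
      by auto
    then show "k \<in> (\<lambda>(n, m). n + m) ` (?F \<times> ?G)"
      by (force intro: image_eqI[of _ _ "(n, k - n)"])
  qed
  moreover have "finite (?F \<times> ?G)"
    using assms by (simp add: cp_carrier_def)
  ultimately show ?thesis
    unfolding cp_carrier_def by (auto intro: finite_subset)
qed

lemma cp_mult_in_commutant:
  assumes f: "f \<in> commutant \<sigma>" and g: "g \<in> commutant \<sigma>"
  shows "cp_mult \<sigma> f g \<in> commutant \<sigma>"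
proof -
  have fc: "f n * int_pow \<sigma> n a = a * f n" and gc: "g n * int_pow \<sigma> n a = a * g n" for n a
    using f g by (auto simp: commutant_iff twisted_commutant_def)
  have summand: "f n * int_pow \<sigma> n (g (k - n)) * int_pow \<sigma> k a = a * (f n * int_pow \<sigma> n (g (k - n)))"
    for n k a
  proof -
    have "int_pow \<sigma> k a = int_pow \<sigma> n (int_pow \<sigma> (k - n) a)"
      using int_pow_add[OF bij_\<sigma>, of n "k - n"] by simp
    then have "f n * int_pow \<sigma> n (g (k - n)) * int_pow \<sigma> k a
        = f n * int_pow \<sigma> n (g (k - n) * int_pow \<sigma> (k - n) a)"
      by (simp add: int_pow_map_mult mult.assoc)
    also have "\<dots> = (f n * int_pow \<sigma> n a) * int_pow \<sigma> n (g (k - n))"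
      by (simp add: gc int_pow_map_mult ac_simps)
    also have "\<dots> = a * (f n * int_pow \<sigma> n (g (k - n)))"
      by (simp add: fc mult.assoc)
    finally show ?thesis .
  qed
  have "cp_mult \<sigma> f g k * int_pow \<sigma> k a = a * cp_mult \<sigma> f g k" for k a
    unfolding cp_mult_def sum_distrib_right sum_distrib_left summand ..
  then show ?thesis
    using f g cp_mult_in_cp_carrier by (simp add: commutant_iff twisted_commutant_def)
qed

lemma gen_subalg_subset_commutant:
  assumes "S \<subseteq> commutant \<sigma>"
  shows "gen_subalg smul \<sigma> S \<subseteq> commutant \<sigma>"
proof
  fix f
  assume "f \<in> gen_subalg smul \<sigma> S"
  then show "f \<in> commutant \<sigma>"
  proof (induction rule: gen_subalg.induct)
    case (gen_base f)
    then show ?case using assms by blast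
  next
    case gen_zero
    then show ?case
      using cp_monom_in_commutant[OF zero_in_twisted_commutant[of 0]]
      by (simp add: cp_monom_def)
  next
    case (gen_add f g)
    then show ?case
      by (simp add: commutant_iff cp_carrier_add C.subspace_add[OF twisted_commutant_subspace])
  next
    case (gen_smul f c)
    then show ?case
      using cp_carrier_map[of f "smul c"] C.subspace_scale[OF twisted_commutant_subspace]
      by (simp add: commutant_iff)
  next
    case (gen_mult f g)
    then show ?case
      using cp_mult_in_commutant by blast
  qed
qed

end

section \<open>A finitely generated commutant forces finite dimension\<close>

text \<open>Stratifying by the number of rounds makes the countability of the union evident.\<close>
primrec coefficient_words :: "('a::comm_ring \<Rightarrow> 'a) \<Rightarrow> (int \<Rightarrow> 'a) set \<Rightarrow> nat \<Rightarrow> 'a set" where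
  "coefficient_words \<sigma> S 0 = (\<lambda>(f, k). f k) ` (S \<times> UNIV)"
| "coefficient_words \<sigma> S (Suc m) = coefficient_words \<sigma> S m
     \<union> (\<lambda>(n, x). int_pow \<sigma> n x) ` (UNIV \<times> coefficient_words \<sigma> S m)
     \<union> (\<lambda>(x, y). x * y) ` (coefficient_words \<sigma> S m \<times> coefficient_words \<sigma> S m)"

lemma countable_coefficient_words: "countable S \<Longrightarrow> countable (coefficient_words \<sigma> S m)"
  by (induction m) simp_all

lemma coefficient_words_mono: "m \<le> m' \<Longrightarrow> coefficient_words \<sigma> S m \<subseteq> coefficient_words \<sigma> S m'"
  by (rule lift_Suc_mono_le[of "coefficient_words \<sigma> S"]) auto

definition coefficient_closure :: "('a::comm_ring \<Rightarrow> 'a) \<Rightarrow> (int \<Rightarrow> 'a) set \<Rightarrow> 'a set" where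
  "coefficient_closure \<sigma> S = (\<Union>m. coefficient_words \<sigma> S m)"

lemma countable_coefficient_closure: "countable S \<Longrightarrow> countable (coefficient_closure \<sigma> S)"
  unfolding coefficient_closure_def by (simp add: countable_coefficient_words)

lemma coefficients_in_coefficient_closure:
  assumes "f \<in> S"
  shows "range f \<subseteq> coefficient_closure \<sigma> S"
proof -
  have "range f \<subseteq> coefficient_words \<sigma> S 0"
    using assms by (auto intro: image_eqI[of _ _ "(f, k)" for k])
  then show ?thesis
    unfolding coefficient_closure_def by blast
qed

lemma int_pow_in_coefficient_closure:
  assumes "x \<in> coefficient_closure \<sigma> S"
  shows "int_pow \<sigma> n x \<in> coefficient_closure \<sigma> S"
proof -
  obtain m where "x \<in> coefficient_words \<sigma> S m"
    using assms unfolding coefficient_closure_def by blast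
  then have "int_pow \<sigma> n x \<in> coefficient_words \<sigma> S (Suc m)"
    by force
  then show ?thesis
    unfolding coefficient_closure_def by blast
qed

lemma mult_in_coefficient_closure:
  assumes "x \<in> coefficient_closure \<sigma> S" "y \<in> coefficient_closure \<sigma> S"
  shows "x * y \<in> coefficient_closure \<sigma> S"
proof -
  obtain i j where "x \<in> coefficient_words \<sigma> S i" "y \<in> coefficient_words \<sigma> S j"
    using assms unfolding coefficient_closure_def by blast
  then have "x \<in> coefficient_words \<sigma> S (max i j)" "y \<in> coefficient_words \<sigma> S (max i j)"
    using coefficient_words_mono[of i "max i j" \<sigma> S] coefficient_words_mono[of j "max i j" \<sigma> S]
    by auto
  then have "x * y \<in> coefficient_words \<sigma> S (Suc (max i j))"
    by force
  then show ?thesis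
    unfolding coefficient_closure_def by blast
qed

context crossed_product
begin

lemma int_pow_in_C_span:
  assumes D: "\<And>x. x \<in> D \<Longrightarrow> int_pow \<sigma> n x \<in> D" and "x \<in> C.span D"
  shows "int_pow \<sigma> n x \<in> C.span D"
proof -
  have "C.span D \<subseteq> {x. int_pow \<sigma> n x \<in> C.span D}"
  proof (rule C.span_minimal)
    show "D \<subseteq> {x. int_pow \<sigma> n x \<in> C.span D}"
      using D C.span_base by blast
    show "C.subspace {x. int_pow \<sigma> n x \<in> C.span D}"
      by (rule C.subspaceI) (auto simp: int_pow_map_add int_pow_map_smul C.span_zero C.span_add C.span_scale)
  qed
  then show ?thesis
    using \<open>x \<in> C.span D\<close> by blast
qed

lemma gen_subalg_values_in_C_span:
  assumes mult: "\<And>x y. x \<in> D \<Longrightarrow> y \<in> D \<Longrightarrow> x * y \<in> D"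
    and pow: "\<And>n x. x \<in> D \<Longrightarrow> int_pow \<sigma> n x \<in> D"
    and coeff: "\<And>f. f \<in> S \<Longrightarrow> range f \<subseteq> D"
    and "f \<in> gen_subalg smul \<sigma> S"
  shows "f k \<in> C.span D"
  using \<open>f \<in> gen_subalg smul \<sigma> S\<close>
proof (induction arbitrary: k rule: gen_subalg.induct)
  case (gen_base f)
  then show ?case
    using coeff C.span_base by blast
next
  case gen_zero
  then show ?case
    by (simp add: C.span_zero)
next
  case (gen_add f g)
  then show ?case
    by (simp add: C.span_add)
next
  case (gen_smul f c)
  then show ?case
    by (simp add: C.span_scale)
next
  case (gen_mult f g)
  have "f n * int_pow \<sigma> n (g (k - n)) \<in> C.span D" for n
    using C_span_mult_closed[OF mult gen_mult.IH(1) int_pow_in_C_span[OF pow gen_mult.IH(2)]] .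
  then show ?case
    unfolding cp_mult_def by (intro C.span_sum)
qed

lemma finite_dim_if_commutant_generated:
  assumes "countable S" and generated: "commutant \<sigma> \<subseteq> gen_subalg smul \<sigma> S"
  shows "finite_dim_complex smul"
proof -
  let ?D = "coefficient_closure \<sigma> S"
  have "a \<in> C.span ?D" for a
  proof -
    have "cp_embed a \<in> gen_subalg smul \<sigma> S"
      using generated cp_embed_in_commutant by blast
    from gen_subalg_values_in_C_span[OF mult_in_coefficient_closure int_pow_in_coefficient_closure
        coefficients_in_coefficient_closure this]
    have "cp_embed a 0 \<in> C.span ?D" .
    then show ?thesis
      by (simp add: cp_embed_def)
  qed
  then show ?thesis
    using finite_dim_complex_if_countable_span countable_coefficient_closure[OF assms(1)] by blast
qed

end

section \<open>A finite-dimensional algebra has a finitely generated commutant\<close>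

context crossed_product
begin

lemma character_comp_int_pow:
  assumes "character smul \<mu>"
  shows "character smul (\<mu> \<circ> int_pow \<sigma> n)"
proof -
  obtain x where "\<mu> x \<noteq> 0"
    using character_nonzero[OF assms] by blast
  then have "(\<mu> \<circ> int_pow \<sigma> n) (int_pow \<sigma> (- n) x) \<noteq> 0"
    by (simp add: int_pow_neg_cancel(2)[OF bij_\<sigma>])
  then show ?thesis
    using assms unfolding character_def
    by (auto simp: int_pow_map_add int_pow_map_smul int_pow_map_mult)
qed

text \<open>The powers of \<open>\<sigma>\<close> act on the finite set of characters by precomposition, so two of them act
  alike; semisimplicity turns this into periodicity of \<open>\<sigma>\<close> itself.\<close>
lemma int_pow_periodic:
  assumes semisimple: "semisimple smul" and finite: "finite (Collect (character smul))"
  obtains N where "N > 0" "int_pow \<sigma> N = id"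
proof -
  let ?X = "Collect (character smul)"
  define \<Phi> where "\<Phi> i = restrict (\<lambda>\<mu>. \<mu> \<circ> int_pow \<sigma> (int i)) ?X" for i
  have "\<Phi> i \<in> ?X \<rightarrow>\<^sub>E ?X" for i
    unfolding \<Phi>_def by (simp add: restrict_PiE_iff character_comp_int_pow)
  then have "range \<Phi> \<subseteq> ?X \<rightarrow>\<^sub>E ?X"
    by (simp add: image_subset_iff)
  moreover have "finite (?X \<rightarrow>\<^sub>E ?X)"
    using finite by (simp add: finite_PiE)
  ultimately have "\<not> inj \<Phi>"
    using range_inj_infinite finite_subset by blast
  then obtain i j where "i \<noteq> j" "\<Phi> i = \<Phi> j"
    unfolding inj_def by blast
  then obtain i j where "i < j" "\<Phi> i = \<Phi> j"
    by (metis linorder_neq_iff)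
  then have same: "\<mu> (int_pow \<sigma> (int i) x) = \<mu> (int_pow \<sigma> (int j) x)" if "character smul \<mu>" for \<mu> x
    using that fun_cong[of "\<Phi> i" "\<Phi> j" \<mu>] by (simp add: \<Phi>_def fun_eq_iff)
  have "int_pow \<sigma> (int j - int i) x = x" for x
  proof -
    define z where "z = int_pow \<sigma> (- int i) x"
    have x: "x = int_pow \<sigma> (int i) z"
      by (simp add: z_def int_pow_neg_cancel(2)[OF bij_\<sigma>])
    have "int_pow \<sigma> (int j - int i) x = int_pow \<sigma> (int j) z"
      using int_pow_add[OF bij_\<sigma>, of "int j - int i" "int i"] by (simp add: x)
    moreover have "int_pow \<sigma> (int j) z = int_pow \<sigma> (int i) z"
      using semisimple same unfolding semisimple_def by metis
    ultimately show ?thesis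
      by (simp add: x)
  qed
  then show ?thesis
    using that[of "int j - int i"] \<open>i < j\<close> by (simp add: fun_eq_iff)
qed

lemma twisted_commutant_mod:
  assumes "int_pow \<sigma> N = id"
  shows "twisted_commutant \<sigma> n = twisted_commutant \<sigma> (n mod N)"
  unfolding twisted_commutant_def using int_pow_mod[OF bij_\<sigma> assms] by simp

lemma cp_monom_in_gen_subalg_if_span:
  assumes "finite B" "c \<in> C.span B" and gen: "\<And>b. b \<in> B \<Longrightarrow> cp_monom n b \<in> gen_subalg smul \<sigma> S"
  shows "cp_monom n c \<in> gen_subalg smul \<sigma> S"
proof -
  obtain w where c: "c = (\<Sum>b\<in>B. smul (w b) b)"
    using assms(2) unfolding C.span_finite[OF assms(1)] by blast
  have "cp_monom n c = (\<lambda>k. \<Sum>b\<in>B. smul (w b) (cp_monom n b k))"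
    by (auto simp: c cp_monom_def fun_eq_iff)
  also have "\<dots> \<in> gen_subalg smul \<sigma> S"
    using assms(1) gen by (intro gen_subalg_sum gen_smul)
  finally show ?thesis .
qed

lemma int_pow_fixes_unit:
  assumes "\<And>a. u * a = a"
  shows "int_pow \<sigma> n u = u"
proof -
  have "surj (int_pow \<sigma> n)"
    using int_pow_automorphism by (simp add: algebra_automorphism_def bij_is_surj)
  then show ?thesis
    using int_pow_map_mult assms by (rule surj_multiplicative_fixes_unit)
qed

lemma cp_monom_unit_in_gen_subalg:
  assumes unit: "\<And>a. u * a = a"
    and gen: "cp_monom N u \<in> gen_subalg smul \<sigma> S" "cp_monom (- N) u \<in> gen_subalg smul \<sigma> S"
  shows "cp_monom (q * N) u \<in> gen_subalg smul \<sigma> S"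
proof -
  have monom_mult: "cp_mult \<sigma> (cp_monom m u) (cp_monom m' u) = cp_monom (m + m') u" for m m'
    by (simp add: cp_mult_monom int_pow_fixes_unit unit)
  show ?thesis
  proof (induction q rule: int_induct[where k = 0])
    case base
    then show ?case
      using gen_mult[OF gen] monom_mult[of N "- N"] by simp
  next
    case (step1 q)
    then show ?case
      using gen_mult[OF step1(2) gen(1)] monom_mult[of "q * N" N] by (simp add: algebra_simps)
  next
    case (step2 q)
    then show ?case
      using gen_mult[OF step2(2) gen(2)] monom_mult[of "q * N" "- N"] by (simp add: algebra_simps)
  qed
qed

lemma cp_monom_in_gen_subalg_if_periodic:
  fixes u :: 'a
  assumes N: "N > 0" "int_pow \<sigma> N = id" and unit: "\<And>a. u * a = a"
    and B: "\<And>r. finite (B r)" "\<And>r. twisted_commutant \<sigma> r \<subseteq> C.span (B r)"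
    and gen_B: "\<And>r b. r \<in> {0..<N} \<Longrightarrow> b \<in> B r \<Longrightarrow> cp_monom r b \<in> gen_subalg smul \<sigma> S"
    and gen_u: "cp_monom N u \<in> gen_subalg smul \<sigma> S" "cp_monom (- N) u \<in> gen_subalg smul \<sigma> S"
    and c: "c \<in> twisted_commutant \<sigma> n"
  shows "cp_monom n c \<in> gen_subalg smul \<sigma> S"
proof -
  let ?r = "n mod N" and ?q = "n div N"
  have "?r \<in> {0..<N}"
    using N(1) by simp
  moreover have "c \<in> C.span (B ?r)"
    using c twisted_commutant_mod[OF N(2)] B(2) by blast
  ultimately have "cp_monom ?r c \<in> gen_subalg smul \<sigma> S"
    using cp_monom_in_gen_subalg_if_span[OF B(1)] gen_B by blast
  moreover have "cp_monom (?q * N) u \<in> gen_subalg smul \<sigma> S"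
    using unit gen_u by (rule cp_monom_unit_in_gen_subalg)
  ultimately have "cp_mult \<sigma> (cp_monom ?r c) (cp_monom (?q * N) u) \<in> gen_subalg smul \<sigma> S"
    by (rule gen_mult)
  moreover have "cp_mult \<sigma> (cp_monom ?r c) (cp_monom (?q * N) u) = cp_monom n c"
    using unit by (simp add: cp_mult_monom int_pow_fixes_unit mult.commute)
  ultimately show ?thesis
    by simp
qed

lemma commutant_subset_gen_subalg:
  assumes "\<And>n c. c \<in> twisted_commutant \<sigma> n \<Longrightarrow> cp_monom n c \<in> gen_subalg smul \<sigma> S"
  shows "commutant \<sigma> \<subseteq> gen_subalg smul \<sigma> S"
proof
  fix f
  assume f: "f \<in> commutant \<sigma>"
  then have "f \<in> cp_carrier" and "\<And>n. f n \<in> twisted_commutant \<sigma> n"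
    by (simp_all add: commutant_iff)
  then have "(\<lambda>k. \<Sum>n\<in>{n. f n \<noteq> 0}. cp_monom n (f n) k) \<in> gen_subalg smul \<sigma> S"
    using assms by (intro gen_subalg_sum) (simp_all add: cp_carrier_def)
  then show "f \<in> gen_subalg smul \<sigma> S"
    using cp_carrier_eq_sum_monom[OF \<open>f \<in> cp_carrier\<close>] by simp
qed

lemma commutant_finitely_generated_if_periodic:
  fixes u :: 'a
  assumes fd: "finite_dim_complex smul" and N: "N > 0" "int_pow \<sigma> N = id"
    and unit: "\<And>a. u * a = a"
  shows "finitely_generated_algebra smul \<sigma> (commutant \<sigma>)"
proof -
  have "\<exists>Br. finite Br \<and> Br \<subseteq> twisted_commutant \<sigma> r \<and> twisted_commutant \<sigma> r \<subseteq> C.span Br" for r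
    by (rule finite_spanning_subset[OF fd]) blast
  then obtain B where B: "\<And>r. finite (B r)" "\<And>r. B r \<subseteq> twisted_commutant \<sigma> r"
    "\<And>r. twisted_commutant \<sigma> r \<subseteq> C.span (B r)"
    by metis
  define S where "S = (\<Union>r\<in>{0..<N}. cp_monom r ` B r) \<union> {cp_monom N u, cp_monom (- N) u}"
  have "finite S"
    unfolding S_def using B(1) by simp
  have "int_pow \<sigma> (- N) = id"
    using int_pow_mod[OF bij_\<sigma> N(2), of "- N"] by simp
  then have "u \<in> twisted_commutant \<sigma> N" "u \<in> twisted_commutant \<sigma> (- N)"
    by (simp_all add: twisted_commutant_def N(2) mult.commute)
  then have "S \<subseteq> commutant \<sigma>"
    unfolding S_def using B(2) cp_monom_in_commutant by blast
  then have "gen_subalg smul \<sigma> S \<subseteq> commutant \<sigma>"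
    by (rule gen_subalg_subset_commutant)
  moreover have "commutant \<sigma> \<subseteq> gen_subalg smul \<sigma> S"
  proof (rule commutant_subset_gen_subalg)
    have "cp_monom r b \<in> gen_subalg smul \<sigma> S" if "r \<in> {0..<N}" "b \<in> B r" for r b
      using that unfolding S_def by (blast intro: gen_base)
    moreover have "cp_monom N u \<in> gen_subalg smul \<sigma> S" "cp_monom (- N) u \<in> gen_subalg smul \<sigma> S"
      unfolding S_def by (simp_all add: gen_base)
    ultimately show "cp_monom n c \<in> gen_subalg smul \<sigma> S" if "c \<in> twisted_commutant \<sigma> n" for n c
      using cp_monom_in_gen_subalg_if_periodic[OF N unit B(1,3)] that by blast
  qed
  ultimately show ?thesis
    unfolding finitely_generated_algebra_def using \<open>finite S\<close> \<open>S \<subseteq> commutant \<sigma>\<close> by blast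
qed

end

theorem theorem4p18:
  fixes smul :: "complex \<Rightarrow> 'a::{real_normed_algebra,comm_ring,banach} \<Rightarrow> 'a"
    and \<sigma> :: "'a \<Rightarrow> 'a"
  assumes "complex_scalar smul"
    and "semisimple smul"
    and "algebra_automorphism smul \<sigma>"
  shows "finitely_generated_algebra smul \<sigma> (commutant \<sigma>) \<longleftrightarrow> finite_dim_complex smul"
proof -
  interpret crossed_product smul \<sigma>
    using assms(1,3) by (intro crossed_product.intro crossed_product_axioms.intro complex_banach_algebra.intro)
  show ?thesis
  proof
    assume "finitely_generated_algebra smul \<sigma> (commutant \<sigma>)"
    then obtain S where "finite S" "gen_subalg smul \<sigma> S = commutant \<sigma>"
      unfolding finitely_generated_algebra_def by blast
    then show "finite_dim_complex smul"
      using finite_dim_if_commutant_generated[of S] countable_finite by blast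
  next
    assume fd: "finite_dim_complex smul"
    then have characters: "finite (Collect (character smul))"
      by (rule finite_characters)
    obtain N where "N > 0" "int_pow \<sigma> N = id"
      using int_pow_periodic[OF assms(2) characters] by blast
    moreover obtain u :: 'a where "\<And>a. u * a = a"
      using semisimple_has_unit[OF assms(2) characters] by blast
    ultimately show "finitely_generated_algebra smul \<sigma> (commutant \<sigma>)"
      by (rule commutant_finitely_generated_if_periodic[OF fd])
  qed
qed

end
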